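(* Let $(\bar z_m)_{m\in\mathbb N}$ be a sequence in $\ell_\infty$ which converges weak$^*$ (as the dual of $\ell_1$) to $\bar z\in\ell_\infty$, and let $|||\cdot|||$ be the norm on $\ell_\infty$ defined in the context. Then $\lim_m|||\bar z_m|||$ exists if and only if $\lim_m\|\bar z_m\|_\infty$ exists. Moreover, $\lim_m|||\bar z_m|||=|||\bar z|||$ if and only if $\lim_m\|\bar z_m\|_\infty=\|\bar z\|_\infty$.
   Context: Let $c_{00}(\mathbb Q)$ be the set of finitely supported sequences with rational coefficients, and let $(u_n)_{n\in\mathbb N}$ be a sequence in $c_{00}(\mathbb Q)$ which lists every element of $c_{00}(\mathbb Q)$ infinitely many times. Let $(a_n)_{n\in\mathbb N}$ be a strictly increasing sequence of positive integers with $a_n>\max\operatorname{supp} u_n$ and $a_n>\|u_n\|_1$ for every $n$. $(e_n)$ denotes the canonical unit vectors and $\langle x,y\rangle=\sum_n x_ny_n$ for $x\in\ell_\infty$, $y\in\ell_1$. For $\bar x\in\ell_\infty$ define $|||\bar x||| = \|\bar x\|_\infty + \sum_{n} 2^{-a_n^2}|\langle \bar x, u_n - e_{a_n}\rangle|$ (it is known that $\sum_n 2^{-a_n^2}\|u_n-e_{a_n}\|_1\le 2$). *)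

theory Defs
  imports "HOL-Analysis.Analysis"
begin

definition linf :: "(nat \<Rightarrow> real) set" where
  "linf = {x. bounded (range x)}"

definition lone :: "(nat \<Rightarrow> real) set" where
  "lone = {y. summable (\<lambda>k. \<bar>y k\<bar>)}"

definition supp_seq :: "(nat \<Rightarrow> real) \<Rightarrow> nat set" where
  "supp_seq x = {k. x k \<noteq> 0}"

definition c00Q :: "(nat \<Rightarrow> real) set" where
  "c00Q = {x. finite (supp_seq x) \<and> (\<forall>k. x k \<in> \<rat>)}"

definition pairing :: "(nat \<Rightarrow> real) \<Rightarrow> (nat \<Rightarrow> real) \<Rightarrow> real" where
  "pairing x y = (\<Sum>k. x k * y k)"

definition norm1 :: "(nat \<Rightarrow> real) \<Rightarrow> real" where
  "norm1 y = (\<Sum>k. \<bar>y k\<bar>)"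

definition supnorm :: "(nat \<Rightarrow> real) \<Rightarrow> real" where
  "supnorm x = (SUP k. \<bar>x k\<bar>)"

definition unitvec :: "nat \<Rightarrow> nat \<Rightarrow> real" where
  "unitvec n = (\<lambda>k. if k = n then 1 else 0)"

definition tnorm :: "(nat \<Rightarrow> nat \<Rightarrow> real) \<Rightarrow> (nat \<Rightarrow> nat) \<Rightarrow> (nat \<Rightarrow> real) \<Rightarrow> real" where
  "tnorm u a x = supnorm x +
     (\<Sum>n. (1 / 2) ^ ((a n) ^ 2) * \<bar>pairing x (\<lambda>k. u n k - unitvec (a n) k)\<bar>)"

definition weak_star_conv :: "(nat \<Rightarrow> nat \<Rightarrow> real) \<Rightarrow> (nat \<Rightarrow> real) \<Rightarrow> bool" where
  "weak_star_conv z w \<longleftrightarrow>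
     (\<forall>y\<in>lone. (\<lambda>m. pairing (z m) y) \<longlonglongrightarrow> pairing w y)"

end

theory Submission
  imports Defs
begin

text \<open>
  The norm \<open>|||x|||\<close> is \<open>supnorm x\<close> plus the series \<open>\<Sum>n. w\<^sub>n * \<bar>\<langle>x, v\<^sub>n\<rangle>\<bar>\<close> with
  \<open>v\<^sub>n = u\<^sub>n - e\<^bsub>a n\<^esub>\<close> in \<open>\<ell>\<^sub>1\<close> and \<open>w\<^sub>n = 2 ^ -(a n)\<^sup>2\<close>. A weak* convergent sequence in
  \<open>\<ell>\<^sub>\<infinity>\<close> is uniformly bounded, say by \<open>B\<close> (uniform boundedness, proved here by a gliding hump).
  Then each term of the series converges and is dominated by \<open>B * w\<^sub>n * \<parallel>v\<^sub>n\<parallel>\<^sub>1 \<le> 2 B / 2 ^ n\<close>,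
  so by Tannery's theorem the series at \<open>z\<^sub>m\<close> converges to the series at the weak* limit.
  Hence \<open>|||z\<^sub>m||| - supnorm z\<^sub>m\<close> converges to \<open>|||z||| - supnorm z\<close>, and both equivalences follow.
\<close>

lemma linf_bounded: "x \<in> linf \<Longrightarrow> \<exists>B. \<forall>k. \<bar>x k\<bar> \<le> B"
  unfolding linf_def bounded_iff by auto

lemma abs_pairing_le:
  assumes B: "\<And>k. \<bar>x k\<bar> \<le> B" and y: "y \<in> lone"
  shows "\<bar>pairing x y\<bar> \<le> B * norm1 y"
proof -
  have sy: "summable (\<lambda>k. \<bar>y k\<bar>)" using y by (simp add: lone_def)
  have le: "\<bar>x k * y k\<bar> \<le> B * \<bar>y k\<bar>" for k
    by (simp add: abs_mult B mult_right_mono)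
  have s: "summable (\<lambda>k. \<bar>x k * y k\<bar>)"
    by (rule summable_comparison_test[OF _ summable_mult[OF sy, of B]]) (use le in auto)
  have "\<bar>pairing x y\<bar> \<le> (\<Sum>k. \<bar>x k * y k\<bar>)"
    unfolding pairing_def by (rule summable_rabs[OF s])
  also have "\<dots> \<le> (\<Sum>k. B * \<bar>y k\<bar>)"
    by (rule suminf_le[OF le s summable_mult[OF sy]])
  also have "\<dots> = B * norm1 y" unfolding norm1_def by (rule suminf_mult[OF sy])
  finally show ?thesis .
qed

lemma norm1_nonneg: "y \<in> lone \<Longrightarrow> 0 \<le> norm1 y"
  unfolding norm1_def lone_def by (simp add: suminf_nonneg)

lemma unitvec_in_lone: "unitvec k \<in> lone"
  unfolding lone_def mem_Collect_eq
  by (rule summable_finite[of "{k}"]) (auto simp: unitvec_def)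

lemma pairing_unitvec: "pairing x (unitvec k) = x k"
proof -
  have "(\<lambda>j. x j * unitvec k j) = (\<lambda>j. if j = k then x j else 0)"
    by (auto simp: unitvec_def)
  then show ?thesis
    unfolding pairing_def using sums_single[of k x] by (simp add: sums_iff)
qed

lemma norm1_unitvec: "norm1 (unitvec k) = 1"
proof -
  have "(\<lambda>j. \<bar>unitvec k j\<bar>) = (\<lambda>j. if j = k then (\<lambda>_. 1::real) j else 0)"
    by (auto simp: unitvec_def)
  then show ?thesis
    unfolding norm1_def using sums_single[of k "\<lambda>_. 1::real"] by (simp add: sums_iff)
qed

lemma c00Q_subset_lone: "c00Q \<subseteq> lone"
  unfolding c00Q_def lone_def supp_seq_def
  by (auto intro: summable_finite[of "{k. _ k \<noteq> 0}"])

lemma lone_diff: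
  assumes "x \<in> lone" "y \<in> lone"
  shows "(\<lambda>k. x k - y k) \<in> lone" "norm1 (\<lambda>k. x k - y k) \<le> norm1 x + norm1 y"
proof -
  have sx: "summable (\<lambda>k. \<bar>x k\<bar>)" and sy: "summable (\<lambda>k. \<bar>y k\<bar>)"
    using assms by (simp_all add: lone_def)
  have le: "\<bar>x k - y k\<bar> \<le> \<bar>x k\<bar> + \<bar>y k\<bar>" for k by linarith
  have s: "summable (\<lambda>k. \<bar>x k - y k\<bar>)"
    by (rule summable_comparison_test[OF _ summable_add[OF sx sy]]) (use le in auto)
  then show "(\<lambda>k. x k - y k) \<in> lone" by (simp add: lone_def)
  have "norm1 (\<lambda>k. x k - y k) \<le> (\<Sum>k. \<bar>x k\<bar> + \<bar>y k\<bar>)"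
    unfolding norm1_def by (rule suminf_le[OF le s summable_add[OF sx sy]])
  also have "\<dots> = norm1 x + norm1 y"
    unfolding norm1_def by (rule suminf_add[OF sx sy, symmetric])
  finally show "norm1 (\<lambda>k. x k - y k) \<le> norm1 x + norm1 y" .
qed

lemma abs_le_supnorm: "(\<And>k. \<bar>x k\<bar> \<le> B) \<Longrightarrow> \<bar>x k\<bar> \<le> supnorm x"
  unfolding supnorm_def by (rule cSUP_upper) (auto intro!: bdd_aboveI2)

lemma less_supnorm_iff: "(\<And>k. \<bar>x k\<bar> \<le> B) \<Longrightarrow> t < supnorm x \<longleftrightarrow> (\<exists>k. t < \<bar>x k\<bar>)"
  unfolding supnorm_def by (subst less_cSUP_iff) (auto intro!: bdd_aboveI2)

\<comment> \<open>\<open>5/14 = 1/2 - 1/7\<close>: the peak term minus a bound for the geometric tail after it.\<close>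
lemma geometric_peak_lower_bound:
  fixes x :: "nat \<Rightarrow> real"
  assumes bound: "\<And>l. \<bar>x l\<bar> \<le> s" and peak: "s / 2 \<le> \<bar>x i\<bar>"
  shows "(1/8)^i * s * (5/14) - (\<Sum>l<i. \<bar>x l\<bar>) \<le> \<bar>\<Sum>l. x l * (1/8)^l\<bar>"
proof -
  define c where "c l = x l * (1/8::real)^l" for l
  define q where "q = (1/8::real)^i * s"
  have cb: "\<bar>c l\<bar> \<le> s * (1/8)^l" for l
    unfolding c_def abs_mult using bound[of l] by (simp add: mult_right_mono)
  have sc: "summable c"
    by (rule summable_comparison_test[of _ "\<lambda>l. s * (1/8)^l"])
      (use cb in \<open>auto intro!: summable_mult summable_geometric\<close>)
  have split: "suminf c = (\<Sum>l. c (l + Suc i)) + sum c {..<i} + c i"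
    using suminf_split_initial_segment[OF sc, of "Suc i"] by simp
  have gs: "(\<lambda>l. s * (1/8)^(Suc i) * (1/8)^l) sums (s * (1/8)^(Suc i) * (1 / (1 - 1/8)))"
    by (intro sums_mult geometric_sums) simp
  have ctb: "\<bar>c (l + Suc i)\<bar> \<le> s * (1/8)^(Suc i) * (1/8)^l" for l
    using cb[of "l + Suc i"] by (simp add: power_add mult_ac)
  have sct: "summable (\<lambda>l. \<bar>c (l + Suc i)\<bar>)"
    by (rule summable_comparison_test[OF _ sums_summable[OF gs]]) (use ctb in auto)
  have "\<bar>\<Sum>l. c (l + Suc i)\<bar> \<le> (\<Sum>l. \<bar>c (l + Suc i)\<bar>)"
    by (rule summable_rabs[OF sct])
  also have "\<dots> \<le> (\<Sum>l. s * (1/8)^(Suc i) * (1/8)^l)"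
    by (rule suminf_le[OF ctb sct sums_summable[OF gs]])
  also have "\<dots> = q / 7" using gs unfolding q_def by (simp add: sums_iff)
  finally have tail: "\<bar>\<Sum>l. c (l + Suc i)\<bar> \<le> q / 7" .
  have "\<bar>sum c {..<i}\<bar> \<le> (\<Sum>l<i. \<bar>c l\<bar>)" by (rule sum_abs)
  also have "\<dots> \<le> (\<Sum>l<i. \<bar>x l\<bar>)"
    unfolding c_def abs_mult by (intro sum_mono mult_left_le) (auto simp: power_le_one)
  finally have head: "\<bar>sum c {..<i}\<bar> \<le> (\<Sum>l<i. \<bar>x l\<bar>)" .
  have mid: "q / 2 \<le> \<bar>c i\<bar>"
    using peak unfolding c_def q_def by (simp add: abs_mult mult_ac)
  show ?thesis
    using split tail head mid unfolding c_def[symmetric] q_def[symmetric] by linarith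
qed

lemma exists_late_peak:
  fixes z :: "nat \<Rightarrow> nat \<Rightarrow> real"
  assumes rows: "\<And>m. \<exists>B. \<forall>k. \<bar>z m k\<bar> \<le> B"
    and cols: "\<And>m k. \<bar>z m k\<bar> \<le> S k"
    and unbounded: "\<not> (\<exists>B. \<forall>m k. \<bar>z m k\<bar> \<le> B)"
  shows "\<exists>m j. N \<le> j \<and> t \<le> supnorm (z m) \<and> supnorm (z m) / 2 \<le> \<bar>z m j\<bar>"
proof -
  define H where "H = (\<Sum>k<N. S k)"
  have S_nonneg: "0 \<le> S k" for k using cols[of 0 k] by linarith
  have S_le_H: "S k \<le> H" if "k < N" for k
    unfolding H_def by (rule member_le_sum) (use that S_nonneg in auto)
  have "\<not> (\<forall>m k. \<bar>z m k\<bar> \<le> max t (2 * H))" using unbounded by blast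
  then obtain m k where mk: "max t (2 * H) < \<bar>z m k\<bar>" by (auto simp: not_le)
  obtain B where B: "\<And>k. \<bar>z m k\<bar> \<le> B" using rows by blast
  define s where "s = supnorm (z m)"
  have big: "max t (2 * H) < s"
    unfolding s_def using mk by (intro less_supnorm_iff[OF B, THEN iffD2]) blast
  moreover have "0 \<le> H" unfolding H_def by (simp add: S_nonneg sum_nonneg)
  ultimately have "s / 2 < s" by linarith
  then have "\<exists>j. s / 2 < \<bar>z m j\<bar>"
    unfolding s_def by (rule less_supnorm_iff[OF B, THEN iffD1])
  then obtain j where j: "s / 2 < \<bar>z m j\<bar>" ..
  have "N \<le> j"
  proof (rule ccontr)
    assume "\<not> N \<le> j"
    then have "\<bar>z m j\<bar> \<le> H" using cols[of m j] S_le_H[of j] by linarith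
    then show False using j big by linarith
  qed
  with big j show ?thesis unfolding s_def by (intro exI[of _ m] exI[of _ j]) simp
qed

definition spread :: "(nat \<Rightarrow> nat) \<Rightarrow> (nat \<Rightarrow> real) \<Rightarrow> nat \<Rightarrow> real" where
  "spread J c k = (if k \<in> range J then c (inv J k) else 0)"

lemma spread_apply: "inj J \<Longrightarrow> spread J c (J i) = c i"
  by (simp add: spread_def)

lemma spread_outside: "k \<notin> range J \<Longrightarrow> spread J c k = 0"
  by (simp add: spread_def)

lemma spread_in_lone:
  assumes J: "strict_mono J" and c: "summable (\<lambda>i. \<bar>c i\<bar>)"
  shows "spread J c \<in> lone"
proof -
  have "inj J" using J strict_mono_imp_inj_on by blast
  then have "summable (\<lambda>i. \<bar>spread J c (J i)\<bar>)" using c by (simp add: spread_apply)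
  then show ?thesis
    unfolding lone_def mem_Collect_eq
    by (subst (asm) summable_mono_reindex[OF J]) (simp_all add: spread_outside)
qed

lemma pairing_spread:
  assumes J: "strict_mono J"
  shows "pairing x (spread J c) = (\<Sum>i. x (J i) * c i)"
proof -
  have "inj J" using J strict_mono_imp_inj_on by blast
  then have "(\<Sum>i. x (J i) * c i) = (\<Sum>i. x (J i) * spread J c (J i))"
    by (simp add: spread_apply)
  also have "\<dots> = pairing x (spread J c)"
    unfolding pairing_def by (rule suminf_mono_reindex[OF J]) (simp add: spread_outside)
  finally show ?thesis ..
qed

lemma strict_mono_choice_sequence:
  fixes f :: "nat \<Rightarrow> nat \<Rightarrow> nat"
  assumes "\<And>N i. N \<le> f N i"
  obtains J N where "strict_mono J" "\<And>i. J i = f (N i) i" "\<And>l i. l < i \<Longrightarrow> J l < N i"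
proof
  define J where "J = rec_nat (f 0 0) (\<lambda>i Ji. f (Ji + 1) (Suc i))"
  define N where "N i = (case i of 0 \<Rightarrow> 0 | Suc l \<Rightarrow> J l + 1)" for i
  show "J i = f (N i) i" for i by (cases i) (simp_all add: N_def J_def)
  have "J i < J (Suc i)" for i using assms[of "J i + 1" "Suc i"] by (simp add: J_def)
  then show J: "strict_mono J" by (simp add: strict_mono_Suc_iff)
  show "J l < N i" if li: "l < i" for l i
  proof -
    obtain i' where i': "i = Suc i'" using li by (cases i) auto
    then have "J l \<le> J i'" using li J by (simp add: strict_mono_less_eq)
    then show ?thesis by (simp add: i' N_def)
  qed
qed

text \<open>
  Gliding hump: if the rows were not uniformly bounded, rows \<open>M i\<close> could be chosen that peak at
  coordinates \<open>J i\<close> moving to the right, each peak dwarfing \<open>8 ^ i\<close> times the coordinatewise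
  bounds of all earlier peaks; pairing with \<open>\<Sum>i. 8 ^ -i * e\<^sub>J\<^sub>i\<close> then is unbounded.
\<close>
lemma uniformly_bounded_if_pairings_bounded:
  fixes z :: "nat \<Rightarrow> nat \<Rightarrow> real"
  assumes rows: "\<And>m. \<exists>B. \<forall>k. \<bar>z m k\<bar> \<le> B"
    and pairings: "\<And>y. y \<in> lone \<Longrightarrow> \<exists>C. \<forall>m. \<bar>pairing (z m) y\<bar> \<le> C"
  shows "\<exists>B. \<forall>m k. \<bar>z m k\<bar> \<le> B"
proof (rule ccontr)
  assume unbounded: "\<not> ?thesis"
  have "\<forall>k. \<exists>C. \<forall>m. \<bar>z m k\<bar> \<le> C"
    using pairings[OF unitvec_in_lone] by (simp add: pairing_unitvec)
  then obtain S where S: "\<And>m k. \<bar>z m k\<bar> \<le> S k" by metis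
  have S_nonneg: "0 \<le> S k" for k using S[of 0 k] by linarith
  define H where "H N = (\<Sum>k<N. S k)" for N
  have "\<exists>m j. N \<le> j \<and> (real i + H N) * 8^i * (14/5) \<le> supnorm (z m)
      \<and> supnorm (z m) / 2 \<le> \<bar>z m j\<bar>" for N i
    by (rule exists_late_peak[OF rows S unbounded])
  then obtain mf jf where peaks: "\<And>N i. N \<le> jf N i
      \<and> (real i + H N) * 8^i * (14/5) \<le> supnorm (z (mf N i))
      \<and> supnorm (z (mf N i)) / 2 \<le> \<bar>z (mf N i) (jf N i)\<bar>"
    by metis
  obtain J Nf where J: "strict_mono J" and J_Nf: "\<And>i. J i = jf (Nf i) i"
    and J_below: "\<And>l i. l < i \<Longrightarrow> J l < Nf i"
    using strict_mono_choice_sequence[of jf] peaks by blast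
  define M where "M i = mf (Nf i) i" for i
  define y where "y = spread J (\<lambda>i. (1/8::real)^i)"
  have "y \<in> lone" unfolding y_def by (rule spread_in_lone[OF J]) (simp add: summable_geometric)
  then obtain C where C: "\<And>m. \<bar>pairing (z m) y\<bar> \<le> C" using pairings by blast
  have "real i \<le> \<bar>pairing (z (M i)) y\<bar>" for i
  proof -
    define s where "s = supnorm (z (M i))"
    have bound: "\<bar>z (M i) (J l)\<bar> \<le> s" for l
      unfolding s_def using rows abs_le_supnorm by metis
    have "(\<Sum>l<i. \<bar>z (M i) (J l)\<bar>) \<le> (\<Sum>l<i. S (J l))" by (rule sum_mono) (rule S)
    also have "\<dots> = sum S (J ` {..<i})"
      using sum.reindex[OF inj_on_subset[OF strict_mono_imp_inj_on[OF J] subset_UNIV], of S "{..<i}"]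
      by simp
    also have "\<dots> \<le> H (Nf i)"
      unfolding H_def using J_below by (intro sum_mono2) (auto simp: S_nonneg)
    finally have head: "(\<Sum>l<i. \<bar>z (M i) (J l)\<bar>) \<le> H (Nf i)" .
    have "(real i + H (Nf i)) * 8^i * (14/5) \<le> s" and "s / 2 \<le> \<bar>z (M i) (J i)\<bar>"
      using peaks[of "Nf i" i] unfolding s_def M_def J_Nf[symmetric] by auto
    moreover have "(real i + H (Nf i)) * 8^i * (14/5) \<le> s \<longleftrightarrow> real i + H (Nf i) \<le> (1/8)^i * s * (5/14)"
      by (simp add: power_one_over field_simps)
    ultimately show ?thesis
      using geometric_peak_lower_bound[of "\<lambda>l. z (M i) (J l)" s i, OF bound] head
      unfolding y_def pairing_spread[OF J] by linarith
  qed
  from this[of "nat \<lceil>C\<rceil> + 1"] C[of "M (nat \<lceil>C\<rceil> + 1)"] show False by linarith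
qed

lemma weak_star_conv_imp_uniformly_bounded:
  assumes "\<And>m. z m \<in> linf" and "weak_star_conv z zbar"
  shows "\<exists>B. \<forall>m k. \<bar>z m k\<bar> \<le> B"
proof (rule uniformly_bounded_if_pairings_bounded)
  show "\<exists>B. \<forall>k. \<bar>z m k\<bar> \<le> B" for m using linf_bounded assms(1) by blast
  fix y assume "y \<in> lone"
  then have "convergent (\<lambda>m. pairing (z m) y)"
    using assms(2) unfolding weak_star_conv_def convergent_def by blast
  then have "Bseq (\<lambda>m. pairing (z m) y)" by (rule convergent_imp_Bseq)
  then show "\<exists>C. \<forall>m. \<bar>pairing (z m) y\<bar> \<le> C" unfolding Bseq_def by auto
qed

lemma weighted_pairings_tendsto:
  assumes wstar: "weak_star_conv z zbar"
    and B: "\<And>m k. \<bar>z m k\<bar> \<le> B"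
    and v: "\<And>n. v n \<in> lone"
    and w: "\<And>n. 0 \<le> w n"
    and summable: "summable (\<lambda>n. w n * norm1 (v n))"
  shows "(\<lambda>m. \<Sum>n. w n * \<bar>pairing (z m) (v n)\<bar>) \<longlonglongrightarrow> (\<Sum>n. w n * \<bar>pairing zbar (v n)\<bar>)"
proof -
  have lim: "(\<lambda>m. w n * \<bar>pairing (z m) (v n)\<bar>) \<longlonglongrightarrow> w n * \<bar>pairing zbar (v n)\<bar>" for n
    using wstar v[of n] unfolding weak_star_conv_def by (intro tendsto_mult tendsto_const tendsto_rabs) blast
  have bound: "norm (w n * \<bar>pairing (z m) (v n)\<bar>) \<le> B * (w n * norm1 (v n))" for n m
  proof -
    have "\<bar>pairing (z m) (v n)\<bar> \<le> B * norm1 (v n)" by (rule abs_pairing_le[OF B v])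
    then have "w n * \<bar>pairing (z m) (v n)\<bar> \<le> w n * (B * norm1 (v n))"
      using w[of n] by (rule mult_left_mono)
    then show ?thesis using w[of n] by (simp add: abs_mult mult.left_commute)
  qed
  have "summable (\<lambda>n. B * (w n * norm1 (v n)))" by (rule summable_mult[OF summable])
  from tannerys_theorem[of "\<lambda>n m. w n * \<bar>pairing (z m) (v n)\<bar>" _ _ "\<lambda>n. B * (w n * norm1 (v n))",
      OF lim _ this] bound
  show ?thesis by (auto intro: always_eventually)
qed

lemma real_succ_le_power_two: "real n + 1 \<le> 2 ^ n"
  by (induction n) auto

lemma succ_times_half_power_square_le:
  assumes "1 \<le> a"
  shows "(real a + 1) * (1/2::real) ^ (a^2) \<le> 2 * (1/2) ^ a"
proof -
  obtain b where b: "a = Suc b" using assms by (cases a) auto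
  have "(1/2::real) ^ (a^2) \<le> (1/2) ^ (2*b + 1)"
    by (rule power_decreasing) (auto simp: b power2_eq_square)
  also have "\<dots> = 2 * (1/2) ^ a * (1/2) ^ a"
    unfolding b by (induction b) (simp_all add: field_simps)
  finally have square: "(1/2::real) ^ (a^2) \<le> 2 * (1/2) ^ a * (1/2) ^ a" .
  have linear: "(real a + 1) * (1/2::real) ^ a \<le> 1"
    using real_succ_le_power_two[of a] by (simp add: power_one_over divide_le_eq)
  have "(real a + 1) * (1/2::real) ^ (a^2) \<le> (real a + 1) * (2 * (1/2) ^ a * (1/2) ^ a)"
    using square by (rule mult_left_mono) simp
  also have "\<dots> = 2 * (1/2) ^ a * ((real a + 1) * (1/2) ^ a)" by (simp add: mult_ac)
  also have "\<dots> \<le> 2 * (1/2) ^ a" using linear by (simp add: mult_left_le)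
  finally show ?thesis .
qed

lemma summable_half_power_square_times:
  assumes a: "strict_mono a" "\<And>n. 0 < a n"
    and f: "\<And>n. 0 \<le> f n" "\<And>n. f n \<le> real (a n) + 1"
  shows "summable (\<lambda>n. (1/2::real) ^ (a n ^ 2) * f n)"
proof (rule summable_comparison_test[of _ "\<lambda>n. 2 * (1/2::real) ^ n"])
  have "(1/2::real) ^ (a n ^ 2) * f n \<le> 2 * (1/2) ^ n" for n
  proof -
    have "(1/2::real) ^ (a n ^ 2) * f n \<le> (1/2) ^ (a n ^ 2) * (real (a n) + 1)"
      using f by (intro mult_left_mono) auto
    also have "\<dots> \<le> 2 * (1/2) ^ a n"
      using succ_times_half_power_square_le[of "a n"] a(2)[of n] by (simp add: mult.commute)
    also have "\<dots> \<le> 2 * (1/2) ^ n"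
      using power_decreasing[of n "a n" "1/2::real"] seq_suble[OF a(1), of n] by simp
    finally show ?thesis .
  qed
  then show "\<exists>N. \<forall>n\<ge>N. norm ((1/2::real) ^ (a n ^ 2) * f n) \<le> 2 * (1/2) ^ n"
    using f(1) by auto
qed (intro summable_mult summable_geometric, simp)

lemma convergent_add_tendsto_iff:
  fixes f g :: "nat \<Rightarrow> real"
  assumes g: "g \<longlonglongrightarrow> c"
  shows "convergent (\<lambda>n. f n + g n) \<longleftrightarrow> convergent f"
    and "(\<lambda>n. f n + g n) \<longlonglongrightarrow> l + c \<longleftrightarrow> f \<longlonglongrightarrow> l"
proof -
  have "convergent g" using g by (auto simp: convergent_def)
  show "convergent (\<lambda>n. f n + g n) \<longleftrightarrow> convergent f"
    using convergent_diff[OF _ \<open>convergent g\<close>, of "\<lambda>n. f n + g n"]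
      convergent_add[OF _ \<open>convergent g\<close>, of f] by auto
  show "(\<lambda>n. f n + g n) \<longlonglongrightarrow> l + c \<longleftrightarrow> f \<longlonglongrightarrow> l"
    using tendsto_diff[OF _ g, of "\<lambda>n. f n + g n" "l + c"] tendsto_add[OF _ g, of f l] by auto
qed

\<comment> \<open>Only the summability of \<open>w\<^sub>n * \<parallel>v\<^sub>n\<parallel>\<^sub>1\<close> matters.\<close>
theorem mainTheorem2:
  fixes u :: "nat \<Rightarrow> nat \<Rightarrow> real" and a :: "nat \<Rightarrow> nat"
    and z :: "nat \<Rightarrow> nat \<Rightarrow> real" and zbar :: "nat \<Rightarrow> real"
  assumes u_c00: "\<And>n. u n \<in> c00Q"
    and u_inf: "\<And>v. v \<in> c00Q \<Longrightarrow> infinite {n. u n = v}"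
    and a_mono: "strict_mono a"
    and a_pos: "\<And>n. a n > 0"
    and a_supp: "\<And>n k. k \<in> supp_seq (u n) \<Longrightarrow> k < a n"
    and a_norm1: "\<And>n. real (a n) > norm1 (u n)"
    and z_linf: "\<And>m. z m \<in> linf"
    and zbar_linf: "zbar \<in> linf"
    and wstar: "weak_star_conv z zbar"
  shows "(convergent (\<lambda>m. tnorm u a (z m)) \<longleftrightarrow> convergent (\<lambda>m. supnorm (z m)))
       \<and> (((\<lambda>m. tnorm u a (z m)) \<longlonglongrightarrow> tnorm u a zbar)
           \<longleftrightarrow> ((\<lambda>m. supnorm (z m)) \<longlonglongrightarrow> supnorm zbar))"
proof -
  define v where "v n = (\<lambda>k. u n k - unitvec (a n) k)" for n
  define w where "w n = (1/2::real) ^ (a n ^ 2)" for n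
  have u_lone: "u n \<in> lone" for n using u_c00 c00Q_subset_lone by blast
  have v_lone: "v n \<in> lone" for n
    unfolding v_def by (rule lone_diff(1)[OF u_lone unitvec_in_lone])
  have "norm1 (v n) \<le> real (a n) + 1" for n
    using lone_diff(2)[OF u_lone unitvec_in_lone, of n "a n"] a_norm1[of n]
    unfolding v_def norm1_unitvec by linarith
  then have "summable (\<lambda>n. w n * norm1 (v n))"
    unfolding w_def using a_mono a_pos norm1_nonneg[OF v_lone]
    by (intro summable_half_power_square_times) auto
  moreover obtain B where B: "\<And>m k. \<bar>z m k\<bar> \<le> B"
    using weak_star_conv_imp_uniformly_bounded[OF z_linf wstar] by blast
  ultimately have lim: "(\<lambda>m. \<Sum>n. w n * \<bar>pairing (z m) (v n)\<bar>) \<longlonglongrightarrow> (\<Sum>n. w n * \<bar>pairing zbar (v n)\<bar>)"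
    using weighted_pairings_tendsto[of z zbar B v w, OF wstar B v_lone] by (simp add: w_def)
  have tnorm_split: "tnorm u a x = supnorm x + (\<Sum>n. w n * \<bar>pairing x (v n)\<bar>)" for x
    unfolding tnorm_def v_def w_def ..
  show ?thesis
    unfolding tnorm_split
    using convergent_add_tendsto_iff(1)[OF lim, of "\<lambda>m. supnorm (z m)"]
      convergent_add_tendsto_iff(2)[OF lim, of "\<lambda>m. supnorm (z m)" "supnorm zbar"]
    by simp
qed

end
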